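(* Let $R$ be an $\mathbb{N}$-graded domain finitely generated over the field $R_0$, and let $M\neq0$ be a finitely generated $\mathbb{Z}$-graded $R$-module. Then not every element of $M$ is almost zero.
   Context: $R^{+\mathrm{GR}}$ is the maximal $\mathbb{Q}_{\ge0}$-graded subring of the absolute integral closure $R^+$ (integral closure of $R$ in an algebraic closure of its fraction field) extending the grading of $R$; $\nu(a)$ is the degree of the lowest nonzero homogeneous component of $a\in R^{+\mathrm{GR}}$. An element $m\in M$ is almost zero if for every $\varepsilon>0$ the element $m\otimes1\in M\otimes_R R^{+\mathrm{GR}}$ is annihilated by some nonzero $a\in R^{+\mathrm{GR}}$ with $\nu(a)<\varepsilon$. *)

theory Defs
  imports Main "HOL-Computational_Algebra.Polynomial" "HOL-Library.Poly_Mapping"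
begin

definition subring_of :: "'a::comm_ring_1 set \<Rightarrow> bool" where
  "subring_of A \<longleftrightarrow> 0 \<in> A \<and> 1 \<in> A \<and> (\<forall>x\<in>A. \<forall>y\<in>A. x + y \<in> A \<and> x * y \<in> A \<and> - x \<in> A)"

inductive_set ring_gen :: "'a::comm_ring_1 set \<Rightarrow> 'a set" for X where
  gen: "x \<in> X \<Longrightarrow> x \<in> ring_gen X"
| zero: "0 \<in> ring_gen X"
| one: "1 \<in> ring_gen X"
| add: "x \<in> ring_gen X \<Longrightarrow> y \<in> ring_gen X \<Longrightarrow> x + y \<in> ring_gen X"
| neg: "x \<in> ring_gen X \<Longrightarrow> - x \<in> ring_gen X"
| mult: "x \<in> ring_gen X \<Longrightarrow> y \<in> ring_gen X \<Longrightarrow> x * y \<in> ring_gen X"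

definition is_decomp :: "'i set \<Rightarrow> ('i \<Rightarrow> 'b set) \<Rightarrow> 'b::comm_monoid_add \<Rightarrow> ('i \<Rightarrow> 'b) \<Rightarrow> bool" where
  "is_decomp I G x f \<longleftrightarrow> finite {i. f i \<noteq> 0} \<and> (\<forall>i. f i \<noteq> 0 \<longrightarrow> i \<in> I)
     \<and> (\<forall>i\<in>I. f i \<in> G i) \<and> x = (\<Sum>i\<in>{i. f i \<noteq> 0}. f i)"

definition direct_sum_decomp :: "'i set \<Rightarrow> ('i \<Rightarrow> 'b::ab_group_add set) \<Rightarrow> 'b set \<Rightarrow> bool" where
  "direct_sum_decomp I G A \<longleftrightarrow>
     (\<forall>i\<in>I. G i \<subseteq> A \<and> 0 \<in> G i \<and> (\<forall>x\<in>G i. \<forall>y\<in>G i. x + y \<in> G i \<and> - x \<in> G i))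
     \<and> (\<forall>x\<in>A. \<exists>f. is_decomp I G x f)
     \<and> (\<forall>x f g. is_decomp I G x f \<and> is_decomp I G x g \<longrightarrow> f = g)"

definition graded_subring :: "'i::comm_monoid_add set \<Rightarrow> 'a::comm_ring_1 set \<Rightarrow> ('i \<Rightarrow> 'a set) \<Rightarrow> bool" where
  "graded_subring I A G \<longleftrightarrow> subring_of A \<and> direct_sum_decomp I G A \<and> 1 \<in> G 0
     \<and> (\<forall>i\<in>I. \<forall>j\<in>I. \<forall>x\<in>G i. \<forall>y\<in>G j. x * y \<in> G (i + j))"

definition fg_graded_domain :: "'a::field set \<Rightarrow> (nat \<Rightarrow> 'a set) \<Rightarrow> bool" where
  "fg_graded_domain R Rg \<longleftrightarrow> graded_subring UNIV R Rg
     \<and> (\<forall>x\<in>Rg 0. x \<noteq> 0 \<longrightarrow> inverse x \<in> Rg 0)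
     \<and> (\<exists>X. finite X \<and> X \<subseteq> R \<and> R = ring_gen (Rg 0 \<union> X))"

text \<open>The ambient field 'a is an algebraic closure of the fraction field of R.\<close>
definition is_alg_closure_of_frac :: "'a::field set \<Rightarrow> bool" where
  "is_alg_closure_of_frac R \<longleftrightarrow>
     (\<forall>p::'a poly. degree p \<ge> 1 \<longrightarrow> (\<exists>x. poly p x = 0))
     \<and> (\<forall>x::'a. \<exists>p. p \<noteq> 0 \<and> (\<forall>i. coeff p i \<in> R) \<and> poly p x = 0)"

definition abs_int_closure :: "'a::field set \<Rightarrow> 'a set" where
  "abs_int_closure R = {x. \<exists>p. lead_coeff p = 1 \<and> (\<forall>i. coeff p i \<in> R) \<and> poly p x = 0}"

definition qgraded_ext :: "'a::field set \<Rightarrow> (nat \<Rightarrow> 'a set) \<Rightarrow> 'a set \<Rightarrow> (rat \<Rightarrow> 'a set) \<Rightarrow> bool" where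
  "qgraded_ext R Rg S Sg \<longleftrightarrow> graded_subring {q. q \<ge> 0} S Sg \<and> S \<subseteq> abs_int_closure R
     \<and> (\<forall>n. Rg n \<subseteq> Sg (of_nat n))"

definition is_RplusGR :: "'a::field set \<Rightarrow> (nat \<Rightarrow> 'a set) \<Rightarrow> 'a set \<Rightarrow> (rat \<Rightarrow> 'a set) \<Rightarrow> bool" where
  "is_RplusGR R Rg S Sg \<longleftrightarrow> qgraded_ext R Rg S Sg
     \<and> (\<forall>T Tg. qgraded_ext R Rg T Tg \<and> S \<subseteq> T \<and> (\<forall>q\<ge>0. Sg q \<subseteq> Tg q) \<longrightarrow> T = S)"

definition nu :: "(rat \<Rightarrow> 'a::field set) \<Rightarrow> 'a \<Rightarrow> rat" where
  "nu Sg a = Min {q. q \<ge> 0 \<and> (THE f. is_decomp {q. q \<ge> 0} Sg a f) q \<noteq> 0}"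

definition is_module :: "'a::comm_ring_1 set \<Rightarrow> ('a \<Rightarrow> 'm::ab_group_add \<Rightarrow> 'm) \<Rightarrow> bool" where
  "is_module R act \<longleftrightarrow> (\<forall>r\<in>R. \<forall>s\<in>R. \<forall>x y.
      act r (x + y) = act r x + act r y \<and> act (r + s) x = act r x + act s x
      \<and> act (r * s) x = act r (act s x) \<and> act 1 x = x)"

definition fg_module :: "'a::comm_ring_1 set \<Rightarrow> ('a \<Rightarrow> 'm::ab_group_add \<Rightarrow> 'm) \<Rightarrow> bool" where
  "fg_module R act \<longleftrightarrow> is_module R act
     \<and> (\<exists>G. finite G \<and> (\<forall>x. \<exists>c. (\<forall>g\<in>G. c g \<in> R) \<and> x = (\<Sum>g\<in>G. act (c g) g)))"

definition Zgraded_module :: "(nat \<Rightarrow> 'a::comm_ring_1 set) \<Rightarrow> ('a \<Rightarrow> 'm::ab_group_add \<Rightarrow> 'm) \<Rightarrow> (int \<Rightarrow> 'm set) \<Rightarrow> bool" where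
  "Zgraded_module Rg act Mg \<longleftrightarrow> direct_sum_decomp UNIV Mg UNIV
     \<and> (\<forall>i j. \<forall>r\<in>Rg i. \<forall>x\<in>Mg j. act r x \<in> Mg (int i + j))"

text \<open>The subgroup of relations; m \<otimes> s = 0 iff single (m,s) 1 lies in it.\<close>
inductive_set tensor_rel :: "'a::comm_ring_1 set \<Rightarrow> 'a set \<Rightarrow> ('a \<Rightarrow> 'm::ab_group_add \<Rightarrow> 'm) \<Rightarrow> (('m \<times> 'a) \<Rightarrow>\<^sub>0 int) set"
  for R S act where
  zero: "0 \<in> tensor_rel R S act"
| add: "u \<in> tensor_rel R S act \<Longrightarrow> v \<in> tensor_rel R S act \<Longrightarrow> u + v \<in> tensor_rel R S act"
| neg: "u \<in> tensor_rel R S act \<Longrightarrow> - u \<in> tensor_rel R S act"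
| addl: "s \<in> S \<Longrightarrow> Poly_Mapping.single (x + y, s) 1 - Poly_Mapping.single (x, s) 1
           - Poly_Mapping.single (y, s) 1 \<in> tensor_rel R S act"
| addr: "s \<in> S \<Longrightarrow> t \<in> S \<Longrightarrow> Poly_Mapping.single (x, s + t) 1 - Poly_Mapping.single (x, s) 1
           - Poly_Mapping.single (x, t) 1 \<in> tensor_rel R S act"
| scal: "r \<in> R \<Longrightarrow> s \<in> S \<Longrightarrow> Poly_Mapping.single (act r x, s) 1
           - Poly_Mapping.single (x, r * s) 1 \<in> tensor_rel R S act"

definition almost_zero :: "'a::field set \<Rightarrow> 'a set \<Rightarrow> (rat \<Rightarrow> 'a set) \<Rightarrow> ('a \<Rightarrow> 'm::ab_group_add \<Rightarrow> 'm) \<Rightarrow> 'm \<Rightarrow> bool" where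
  "almost_zero R S Sg act m \<longleftrightarrow> (\<forall>\<epsilon>::rat. \<epsilon> > 0 \<longrightarrow>
     (\<exists>a\<in>S. a \<noteq> 0 \<and> nu Sg a < \<epsilon> \<and> Poly_Mapping.single (m, a) 1 \<in> tensor_rel R S act))"

end

theory Submission
  imports Defs
begin

(*
  Idea: we exhibit an R-balanced biadditive map  B : M \<times> R^{+GR} \<rightarrow> K  (K the ambient field)
  and an element m0 with B(m0, a) \<noteq> 0 for every nonzero a with nu a < 1.  Since B factors
  through the tensor product, m0 \<otimes> a \<noteq> 0 for all such a, so m0 is not almost zero (take eps = 1).

  The map is B(x, s) = psi x * T s, where
  - psi : M \<rightarrow> R_0 is an R_0-linear functional on the lowest nonzero degree d of M (which exists
    because M is finitely generated), composed with the projection onto M_d; it is the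
    coordinate of one vector of a minimal spanning family of M_d.  Since elements
    of positive degree of R push M_d into higher degrees, psi (r x) = r_0 * psi x;
  - T : R^{+GR} \<rightarrow> K keeps the homogeneous components of degree < 1.  Since R lives in integral
    degrees, T (r s) = r_0 * T s, and T a \<noteq> 0 whenever a \<noteq> 0 has lowest degree nu a < 1.
*)

section \<open>Internal direct sum decompositions\<close>

definition dec :: "'i set \<Rightarrow> ('i \<Rightarrow> 'b set) \<Rightarrow> 'b::comm_monoid_add \<Rightarrow> 'i \<Rightarrow> 'b" where
  "dec I G x = (THE f. is_decomp I G x f)"

lemma dec_eq:
  assumes "direct_sum_decomp I G A" "is_decomp I G x f"
  shows "dec I G x = f"
  unfolding dec_def using assms unfolding direct_sum_decomp_def by (metis the_equality)

lemma dec_is: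
  assumes "direct_sum_decomp I G A" "x \<in> A"
  shows "is_decomp I G x (dec I G x)"
  using assms dec_eq unfolding direct_sum_decomp_def by metis

lemma decomp_zero:
  assumes "direct_sum_decomp I G A"
  shows "is_decomp I G 0 (\<lambda>_. 0)"
  using assms unfolding is_decomp_def direct_sum_decomp_def by auto

lemma decomp_single:
  assumes "direct_sum_decomp I G A" "i \<in> I" "y \<in> G i"
  shows "is_decomp I G y (\<lambda>j. if j = i then y else 0)"
proof -
  have "{j. (if j = i then y else 0) \<noteq> 0} = (if y = 0 then {} else {i})" by auto
  then show ?thesis using assms unfolding is_decomp_def direct_sum_decomp_def by auto
qed

lemma sum_over_support:
  fixes h :: "'i \<Rightarrow> 'b::comm_monoid_add"
  assumes "finite U" "{i. h i \<noteq> 0} \<subseteq> U"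
  shows "(\<Sum>i\<in>{i. h i \<noteq> 0}. h i) = (\<Sum>i\<in>U. h i)"
  using assms by (intro sum.mono_neutral_left) auto

lemma decomp_add:
  fixes G :: "'i \<Rightarrow> 'b::ab_group_add set"
  assumes "direct_sum_decomp I G A" "is_decomp I G x f" "is_decomp I G y g"
  shows "is_decomp I G (x + y) (\<lambda>i. f i + g i)"
proof -
  let ?U = "{i. f i \<noteq> 0} \<union> {i. g i \<noteq> 0}"
  have fU: "finite ?U" using assms(2,3) unfolding is_decomp_def by auto
  have sub: "{i. f i + g i \<noteq> 0} \<subseteq> ?U" by auto
  have xy: "x = (\<Sum>i\<in>{i. f i \<noteq> 0}. f i)" "y = (\<Sum>i\<in>{i. g i \<noteq> 0}. g i)"
    using assms(2,3) unfolding is_decomp_def by auto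
  have "x + y = (\<Sum>i\<in>?U. f i) + (\<Sum>i\<in>?U. g i)"
    unfolding xy by (subst sum_over_support[OF fU], blast)+ (rule refl)
  also have "\<dots> = (\<Sum>i\<in>{i. f i + g i \<noteq> 0}. f i + g i)"
    using sum_over_support[OF fU sub] by (simp add: sum.distrib)
  finally show ?thesis
    using assms fU sub unfolding is_decomp_def direct_sum_decomp_def
    by (auto intro: finite_subset)
qed

lemma decomp_sum:
  fixes G :: "'i \<Rightarrow> 'b::ab_group_add set"
  assumes "direct_sum_decomp I G A" "finite F" "\<And>a. a \<in> F \<Longrightarrow> is_decomp I G (x a) (f a)"
  shows "is_decomp I G (\<Sum>a\<in>F. x a) (\<lambda>i. \<Sum>a\<in>F. f a i)"
  using assms(2,3)
proof (induction F rule: finite_induct)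
  case empty
  then show ?case using decomp_zero[OF assms(1)] by simp
next
  case (insert a F)
  then show ?case using decomp_add[OF assms(1), of "x a" "f a" "sum x F"] by simp
qed

text \<open>An additive map h that raises degrees by c shifts decompositions by c.  This is how
  multiplication by a homogeneous element of R acts on decompositions in M and in R^{+GR}.\<close>
lemma decomp_shift:
  fixes G :: "'i::ab_group_add \<Rightarrow> 'b::ab_group_add set"
  assumes ds: "direct_sum_decomp I G A" and d: "is_decomp I G x f"
    and hadd: "\<And>u v. h (u + v) = h u + h v"
    and hG: "\<And>j y. j \<in> I \<Longrightarrow> y \<in> G j \<Longrightarrow> h y \<in> G (j + c)"
    and cI: "\<And>j. j \<in> I \<Longrightarrow> j + c \<in> I"
  shows "is_decomp I G (h x) (\<lambda>p. h (f (p - c)))"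
proof -
  have h0: "h 0 = 0" using hadd[of 0 0] by simp
  have h_sum: "h (sum g F) = (\<Sum>a\<in>F. h (g a))" for F and g :: "'i \<Rightarrow> 'b"
    by (induction F rule: infinite_finite_induct) (auto simp: h0 hadd)
  let ?F = "{j. f j \<noteq> 0}"
  have fF: "finite ?F" using d unfolding is_decomp_def by auto
  have supp: "{p. h (f (p - c)) \<noteq> 0} \<subseteq> (\<lambda>j. j + c) ` ?F"
  proof
    fix p assume "p \<in> {p. h (f (p - c)) \<noteq> 0}"
    then have "f (p - c) \<noteq> 0" using h0 by auto
    then show "p \<in> (\<lambda>j. j + c) ` ?F" by (intro image_eqI[of _ _ "p - c"]) auto
  qed
  have "h x = (\<Sum>j\<in>?F. h (f j))" using d h_sum unfolding is_decomp_def by metis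
  also have "\<dots> = (\<Sum>p\<in>(\<lambda>j. j + c) ` ?F. h (f (p - c)))"
    by (subst sum.reindex) (auto simp: inj_on_def)
  also have "\<dots> = (\<Sum>p\<in>{p. h (f (p - c)) \<noteq> 0}. h (f (p - c)))"
    using supp fF by (intro sum.mono_neutral_right) auto
  finally have sum_eq: "h x = (\<Sum>p\<in>{p. h (f (p - c)) \<noteq> 0}. h (f (p - c)))" .
  have in_I: "p \<in> I" if "h (f (p - c)) \<noteq> 0" for p
  proof -
    have "f (p - c) \<noteq> 0" using that h0 by auto
    then have "p - c \<in> I" using d unfolding is_decomp_def by auto
    then show "p \<in> I" using cI by fastforce
  qed
  have in_G: "h (f (p - c)) \<in> G p" if "p \<in> I" for p
  proof (cases "f (p - c) = 0")
    case True
    then show ?thesis using h0 ds that unfolding direct_sum_decomp_def by auto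
  next
    case False
    then have "p - c \<in> I" "f (p - c) \<in> G (p - c)" using d unfolding is_decomp_def by auto
    then show ?thesis using hG by fastforce
  qed
  show ?thesis
    unfolding is_decomp_def using sum_eq supp fF in_I in_G by (blast intro: finite_subset)
qed

lemma int_set_least:
  fixes D :: "int set"
  assumes "j0 \<in> D" and "\<And>j. j \<in> D \<Longrightarrow> L \<le> j"
  shows "\<exists>d\<in>D. \<forall>j\<in>D. d \<le> j"
proof -
  have "L + int (nat (j0 - L)) \<in> D" using assms by simp
  from ex_has_least_nat[of "\<lambda>n. L + int n \<in> D", OF this, of id]
  obtain n where n: "L + int n \<in> D" "\<And>k. L + int k \<in> D \<Longrightarrow> n \<le> k" by auto
  have "L + int n \<le> j" if "j \<in> D" for j
    using n(2)[of "nat (j - L)"] assms(2)[OF that] that by simp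
  with n(1) show ?thesis by blast
qed

section \<open>Balanced maps vanish on the tensor relations\<close>

definition tensor_lift :: "('m \<Rightarrow> 's \<Rightarrow> 'b::comm_ring_1) \<Rightarrow> ('m \<times> 's \<Rightarrow>\<^sub>0 int) \<Rightarrow> 'b" where
  "tensor_lift B u =
     (\<Sum>p\<in>Poly_Mapping.keys u. of_int (Poly_Mapping.lookup u p) * B (fst p) (snd p))"

lemma tensor_lift_superset:
  assumes "finite U" "Poly_Mapping.keys u \<subseteq> U"
  shows "tensor_lift B u = (\<Sum>p\<in>U. of_int (Poly_Mapping.lookup u p) * B (fst p) (snd p))"
  unfolding tensor_lift_def using assms by (intro sum.mono_neutral_left) (auto simp: in_keys_iff)

lemma tensor_lift_add: "tensor_lift B (u + v) = tensor_lift B u + tensor_lift B v"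
proof -
  let ?U = "Poly_Mapping.keys u \<union> Poly_Mapping.keys v"
  have "finite ?U" "Poly_Mapping.keys (u + v) \<subseteq> ?U" using keys_add[of u v] by auto
  then show ?thesis
    by (simp add: tensor_lift_superset[of ?U] lookup_add distrib_right sum.distrib)
qed

lemma tensor_lift_neg: "tensor_lift B (- u) = - tensor_lift B u"
proof -
  have "Poly_Mapping.keys (- u) \<subseteq> Poly_Mapping.keys u" by (auto simp: in_keys_iff)
  then show ?thesis
    by (simp add: tensor_lift_superset[of "Poly_Mapping.keys u"] tensor_lift_def sum_negf)
qed

lemma tensor_lift_diff: "tensor_lift B (u - v) = tensor_lift B u - tensor_lift B v"
  using tensor_lift_add[of B u "- v"] tensor_lift_neg[of B v] by simp

lemma tensor_lift_single: "tensor_lift B (Poly_Mapping.single (x, s) 1) = B x s"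
  unfolding tensor_lift_def by simp

lemma balanced_map_vanishes:
  fixes act :: "'r::comm_ring_1 \<Rightarrow> 'm::ab_group_add \<Rightarrow> 'm" and B :: "'m \<Rightarrow> 'r \<Rightarrow> 'b::comm_ring_1"
  assumes add_left: "\<And>x y s. s \<in> S \<Longrightarrow> B (x + y) s = B x s + B y s"
    and add_right: "\<And>x s t. s \<in> S \<Longrightarrow> t \<in> S \<Longrightarrow> B x (s + t) = B x s + B x t"
    and balanced: "\<And>r x s. r \<in> R \<Longrightarrow> s \<in> S \<Longrightarrow> B (act r x) s = B x (r * s)"
    and rel: "Poly_Mapping.single (x, s) 1 \<in> tensor_rel R S act"
  shows "B x s = 0"
proof -
  have "tensor_lift B u = 0" if "u \<in> tensor_rel R S act" for u
    using that
  proof (induction rule: tensor_rel.induct)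
    case zero
    then show ?case unfolding tensor_lift_def by simp
  qed (simp_all add: tensor_lift_add tensor_lift_neg tensor_lift_diff tensor_lift_single
      add_left add_right balanced)
  from this[OF rel] show ?thesis by (simp add: tensor_lift_single)
qed

section \<open>Graded rings and graded modules\<close>

locale graded_ring =
  fixes R :: "'a::field set" and Rg :: "nat \<Rightarrow> 'a set"
  assumes graded_R: "graded_subring UNIV R Rg"
begin

lemma R_subring: "subring_of R" using graded_R unfolding graded_subring_def by auto
lemma R_zero: "0 \<in> R" using R_subring unfolding subring_of_def by auto
lemma R_add: "x \<in> R \<Longrightarrow> y \<in> R \<Longrightarrow> x + y \<in> R" using R_subring unfolding subring_of_def by auto
lemma R_neg: "x \<in> R \<Longrightarrow> - x \<in> R" using R_subring unfolding subring_of_def by auto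
lemma R_sum: "(\<And>i. i \<in> F \<Longrightarrow> c i \<in> R) \<Longrightarrow> sum c F \<in> R"
  by (induction F rule: infinite_finite_induct) (auto simp: R_zero R_add)

lemma R_decomp: "direct_sum_decomp UNIV Rg R" using graded_R unfolding graded_subring_def by auto
lemma Rg_sub_R: "Rg i \<subseteq> R" using R_decomp unfolding direct_sum_decomp_def by auto

lemma Rg0_R: "x \<in> Rg 0 \<Longrightarrow> x \<in> R" using Rg_sub_R by auto
lemma Rg0_zero: "0 \<in> Rg 0" using R_decomp unfolding direct_sum_decomp_def by auto
lemma Rg0_one: "1 \<in> Rg 0" using graded_R unfolding graded_subring_def by auto
lemma Rg0_add: "x \<in> Rg 0 \<Longrightarrow> y \<in> Rg 0 \<Longrightarrow> x + y \<in> Rg 0"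
  using R_decomp unfolding direct_sum_decomp_def by auto
lemma Rg0_diff: "x \<in> Rg 0 \<Longrightarrow> y \<in> Rg 0 \<Longrightarrow> x - y \<in> Rg 0"
  using Rg0_add[of x "- y"] R_decomp unfolding direct_sum_decomp_def by auto
lemma Rg0_mult: "x \<in> Rg 0 \<Longrightarrow> y \<in> Rg 0 \<Longrightarrow> x * y \<in> Rg 0"
  using graded_R unfolding graded_subring_def by (metis UNIV_I add_0)

abbreviation Rcomp :: "'a \<Rightarrow> nat \<Rightarrow> 'a" where "Rcomp r \<equiv> dec UNIV Rg r"

lemma Rcomp_is: "r \<in> R \<Longrightarrow> is_decomp UNIV Rg r (Rcomp r)" using dec_is[OF R_decomp] .
lemma Rcomp_in: "r \<in> R \<Longrightarrow> Rcomp r i \<in> Rg i" using Rcomp_is unfolding is_decomp_def by auto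
lemma Rcomp_R: "r \<in> R \<Longrightarrow> Rcomp r i \<in> R" using Rcomp_in Rg_sub_R by auto
lemma Rcomp_sum: "r \<in> R \<Longrightarrow> r = (\<Sum>i\<in>{i. Rcomp r i \<noteq> 0}. Rcomp r i)"
  using Rcomp_is unfolding is_decomp_def by auto
lemma Rcomp_finite: "r \<in> R \<Longrightarrow> finite {i. Rcomp r i \<noteq> 0}"
  using Rcomp_is unfolding is_decomp_def by auto

end

locale graded_module = graded_ring R Rg
  for R :: "'a::field set" and Rg :: "nat \<Rightarrow> 'a set" +
  fixes act :: "'a \<Rightarrow> 'm::ab_group_add \<Rightarrow> 'm" and Mg :: "int \<Rightarrow> 'm set"
  assumes module: "is_module R act"
    and graded_M: "Zgraded_module Rg act Mg"
begin

lemma act_add_right: "r \<in> R \<Longrightarrow> act r (x + y) = act r x + act r y"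
  using module R_zero unfolding is_module_def by blast
lemma act_add_left: "r \<in> R \<Longrightarrow> s \<in> R \<Longrightarrow> act (r + s) x = act r x + act s x"
  using module unfolding is_module_def by blast
lemma act_mult: "r \<in> R \<Longrightarrow> s \<in> R \<Longrightarrow> act (r * s) x = act r (act s x)"
  using module unfolding is_module_def by blast
lemma act_one: "act 1 x = x"
  using module R_zero unfolding is_module_def by blast
lemma act_zero_right: "r \<in> R \<Longrightarrow> act r 0 = 0"
  using act_add_right[of r 0 0] by simp
lemma act_zero_left: "act 0 x = 0"
  using act_add_left[OF R_zero R_zero, of x] by simp
lemma act_neg_right: "r \<in> R \<Longrightarrow> act r (- x) = - act r x"
  using act_add_right[of r x "- x"] act_zero_right by (simp add: eq_neg_iff_add_eq_0 add.commute)
lemma act_diff_left: "r \<in> R \<Longrightarrow> s \<in> R \<Longrightarrow> act (r - s) x = act r x - act s x"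
  using act_add_left[of r "- s" x] act_add_left[of s "- s" x] R_neg act_zero_left
  by (simp add: eq_neg_iff_add_eq_0 add.commute)
lemma act_sum_right: "r \<in> R \<Longrightarrow> act r (\<Sum>i\<in>F. x i) = (\<Sum>i\<in>F. act r (x i))"
  by (induction F rule: infinite_finite_induct) (auto simp: act_zero_right act_add_right)
lemma act_sum_left: "(\<And>i. i \<in> F \<Longrightarrow> c i \<in> R) \<Longrightarrow> act (\<Sum>i\<in>F. c i) x = (\<Sum>i\<in>F. act (c i) x)"
  by (induction F rule: infinite_finite_induct) (auto simp: act_zero_left act_add_left R_sum)

lemma M_decomp: "direct_sum_decomp UNIV Mg UNIV" using graded_M unfolding Zgraded_module_def by auto

abbreviation Mcomp :: "'m \<Rightarrow> int \<Rightarrow> 'm" where "Mcomp x \<equiv> dec UNIV Mg x"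

lemma Mcomp_is: "is_decomp UNIV Mg x (Mcomp x)" using dec_is[OF M_decomp] by simp
lemma Mcomp_in: "Mcomp x j \<in> Mg j" using Mcomp_is unfolding is_decomp_def by auto

lemma Mcomp_add: "Mcomp (x + y) j = Mcomp x j + Mcomp y j"
  using dec_eq[OF M_decomp decomp_add[OF M_decomp Mcomp_is Mcomp_is]] by simp

lemma Mcomp_sum:
  assumes "finite F"
  shows "Mcomp (\<Sum>a\<in>F. x a) j = (\<Sum>a\<in>F. Mcomp (x a) j)"
  using dec_eq[OF M_decomp decomp_sum[OF M_decomp assms Mcomp_is]] by simp

lemma Mcomp_homogeneous: "y \<in> Mg j \<Longrightarrow> Mcomp y j = y"
  using dec_eq[OF M_decomp decomp_single[OF M_decomp UNIV_I]] by (metis (full_types))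

lemma Mcomp_nonzero:
  assumes "x \<noteq> 0"
  shows "\<exists>j. Mcomp x j \<noteq> 0"
proof (rule ccontr)
  assume "\<nexists>j. Mcomp x j \<noteq> 0"
  then have "{j. Mcomp x j \<noteq> 0} = {}" by auto
  then show False using Mcomp_is[of x] assms unfolding is_decomp_def by simp
qed

lemma Mcomp_act:
  assumes r: "r \<in> R"
  shows "Mcomp (act r x) p = (\<Sum>i\<in>{i. Rcomp r i \<noteq> 0}. act (Rcomp r i) (Mcomp x (p - int i)))"
proof -
  let ?F = "{i. Rcomp r i \<noteq> 0}"
  have act_split: "act r x = (\<Sum>i\<in>?F. act (Rcomp r i) x)"
    using act_sum_left[of ?F "Rcomp r" x] Rcomp_sum[OF r] Rcomp_R[OF r] by metis
  have "is_decomp UNIV Mg (act (Rcomp r i) x) (\<lambda>p. act (Rcomp r i) (Mcomp x (p - int i)))" for i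
  proof (rule decomp_shift[OF M_decomp Mcomp_is])
    show "act (Rcomp r i) (u + v) = act (Rcomp r i) u + act (Rcomp r i) v" for u v
      using act_add_right Rcomp_R[OF r] by blast
    show "act (Rcomp r i) y \<in> Mg (j + int i)" if "y \<in> Mg j" for j y
      using graded_M Rcomp_in[OF r, of i] that unfolding Zgraded_module_def by (simp add: add.commute)
  qed auto
  then have "is_decomp UNIV Mg (act r x) (\<lambda>p. \<Sum>i\<in>?F. act (Rcomp r i) (Mcomp x (p - int i)))"
    unfolding act_split by (rule decomp_sum[OF M_decomp Rcomp_finite[OF r]])
  from fun_cong[OF dec_eq[OF M_decomp this]] show ?thesis by simp
qed

end

section \<open>A linear functional on the lowest degree of a finitely generated graded module\<close>

locale fg_graded_module = graded_module R Rg act Mg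
  for R :: "'a::field set" and Rg :: "nat \<Rightarrow> 'a set"
    and act :: "'a \<Rightarrow> 'm::ab_group_add \<Rightarrow> 'm" and Mg :: "int \<Rightarrow> 'm set" +
  assumes Rg0_field: "\<forall>x\<in>Rg 0. x \<noteq> 0 \<longrightarrow> inverse x \<in> Rg 0"
    and finitely_generated: "\<exists>G. finite G \<and> (\<forall>x. \<exists>c. (\<forall>g\<in>G. c g \<in> R) \<and> x = (\<Sum>g\<in>G. act (c g) g))"
    and nontrivial: "\<exists>m::'m. m \<noteq> 0"
begin

lemma Rg0_inverse: "x \<in> Rg 0 \<Longrightarrow> inverse x \<in> Rg 0"
  using Rg0_field Rg0_zero by (cases "x = 0") auto

definition gens :: "'m set" where
  "gens = (SOME G. finite G \<and> (\<forall>x. \<exists>c. (\<forall>g\<in>G. c g \<in> R) \<and> x = (\<Sum>g\<in>G. act (c g) g)))"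

lemma gens_finite: "finite gens"
  and gens_generate: "\<exists>c. (\<forall>g\<in>gens. c g \<in> R) \<and> x = (\<Sum>g\<in>gens. act (c g) g)"
  using someI_ex[OF finitely_generated] unfolding gens_def by auto

text \<open>The degrees in which M is nonzero; they are bounded below by the lowest degree
  occurring in a generator, since R is nonnegatively graded.\<close>
definition degrees :: "int set" where "degrees = {j. \<exists>y\<in>Mg j. y \<noteq> 0}"

lemma degrees_bounded: "\<exists>L. \<forall>j\<in>degrees. L \<le> j"
proof -
  let ?U = "\<Union>g\<in>gens. {j. Mcomp g j \<noteq> 0}"
  have fU: "finite ?U" using gens_finite Mcomp_is unfolding is_decomp_def by auto
  define L where "L = Min (insert 0 ?U)"
  have L_le: "L \<le> u" if "u \<in> ?U" for u unfolding L_def using fU that by auto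
  have "L \<le> j" if "j \<in> degrees" for j
  proof (rule ccontr)
    assume "\<not> L \<le> j"
    obtain y where y: "y \<in> Mg j" "y \<noteq> 0" using \<open>j \<in> degrees\<close> unfolding degrees_def by auto
    obtain c where c: "\<forall>g\<in>gens. c g \<in> R" "y = (\<Sum>g\<in>gens. act (c g) g)" using gens_generate by blast
    have below: "Mcomp g (j - int i) = 0" if "g \<in> gens" for g i
      using L_le[of "j - int i"] that \<open>\<not> L \<le> j\<close> by force
    have "y = Mcomp y j" using Mcomp_homogeneous[OF y(1)] by simp
    also have "\<dots> = (\<Sum>g\<in>gens. Mcomp (act (c g) g) j)" using c(2) Mcomp_sum[OF gens_finite] by metis
    also have "\<dots> = 0" using Mcomp_act c(1) below act_zero_right Rcomp_R by simp
    finally show False using y(2) by simp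
  qed
  then show ?thesis by blast
qed

definition lowest :: int where "lowest = (SOME d. d \<in> degrees \<and> (\<forall>j\<in>degrees. d \<le> j))"

lemma lowest: "lowest \<in> degrees" "\<And>j. j \<in> degrees \<Longrightarrow> lowest \<le> j"
proof -
  obtain m :: 'm where "m \<noteq> 0" using nontrivial by auto
  then obtain j where "Mcomp m j \<noteq> 0" using Mcomp_nonzero by auto
  then have "j \<in> degrees" unfolding degrees_def using Mcomp_in by auto
  with degrees_bounded int_set_least have "\<exists>d. d \<in> degrees \<and> (\<forall>j\<in>degrees. d \<le> j)" by meson
  from someI_ex[OF this] show "lowest \<in> degrees" "\<And>j. j \<in> degrees \<Longrightarrow> lowest \<le> j"
    unfolding lowest_def by auto
qed

lemma below_lowest: "j < lowest \<Longrightarrow> y \<in> Mg j \<Longrightarrow> y = 0"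
  using lowest(2)[of j] unfolding degrees_def by force

lemma Mcomp_act_lowest:
  assumes r: "r \<in> R"
  shows "Mcomp (act r x) lowest = act (Rcomp r 0) (Mcomp x lowest)"
proof -
  let ?F = "{i. Rcomp r i \<noteq> 0}"
  have "Mcomp (act r x) lowest = (\<Sum>i\<in>?F. act (Rcomp r i) (Mcomp x (lowest - int i)))"
    by (rule Mcomp_act[OF r])
  also have "\<dots> = (\<Sum>i\<in>?F. if i = 0 then act (Rcomp r 0) (Mcomp x lowest) else 0)"
    using below_lowest[OF _ Mcomp_in] act_zero_right Rcomp_R[OF r] by (intro sum.cong) auto
  also have "\<dots> = act (Rcomp r 0) (Mcomp x lowest)"
    using act_zero_left by (auto simp: sum.delta[OF Rcomp_finite[OF r]])
  finally show ?thesis .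
qed

text \<open>M_lowest is a finitely spanned R_0-vector space: it is spanned by the lowest-degree
  components of the generators.  We fix a spanning subfamily of minimal size.\<close>
abbreviation low :: "'m \<Rightarrow> 'm" where "low g \<equiv> Mcomp g lowest"

definition span0 :: "'m set \<Rightarrow> 'm set" where
  "span0 J = {y. \<exists>c. (\<forall>g\<in>J. c g \<in> Rg 0) \<and> y = (\<Sum>g\<in>J. act (c g) (low g))}"

lemma gens_span: "Mg lowest \<subseteq> span0 gens"
proof
  fix y assume y: "y \<in> Mg lowest"
  obtain c where c: "\<forall>g\<in>gens. c g \<in> R" "y = (\<Sum>g\<in>gens. act (c g) g)" using gens_generate by blast
  have "y = Mcomp y lowest" using Mcomp_homogeneous[OF y] by simp
  also have "\<dots> = (\<Sum>g\<in>gens. Mcomp (act (c g) g) lowest)" using c(2) Mcomp_sum[OF gens_finite] by metis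
  also have "\<dots> = (\<Sum>g\<in>gens. act (Rcomp (c g) 0) (low g))" using Mcomp_act_lowest c(1) by simp
  finally show "y \<in> span0 gens"
    unfolding span0_def using Rcomp_in c(1) by (intro CollectI exI[of _ "\<lambda>g. Rcomp (c g) 0"]) auto
qed

definition spanning :: "'m set \<Rightarrow> bool" where
  "spanning J \<longleftrightarrow> J \<subseteq> gens \<and> Mg lowest \<subseteq> span0 J"

definition basis :: "'m set" where
  "basis = (SOME J. spanning J \<and> (\<forall>J'. spanning J' \<longrightarrow> card J \<le> card J'))"

lemma basis: "spanning basis" "\<And>J'. spanning J' \<Longrightarrow> card basis \<le> card J'"
proof -
  have "spanning gens" unfolding spanning_def using gens_span by auto
  from ex_has_least_nat[of spanning gens card, OF this]
  have "\<exists>J. spanning J \<and> (\<forall>J'. spanning J' \<longrightarrow> card J \<le> card J')" .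
  from someI_ex[OF this] show "spanning basis" "\<And>J'. spanning J' \<Longrightarrow> card basis \<le> card J'"
    unfolding basis_def by auto
qed

lemma basis_finite: "finite basis"
  using basis(1) gens_finite unfolding spanning_def by (auto intro: finite_subset)

lemma basis_span: "\<exists>a. (\<forall>g\<in>basis. a g \<in> Rg 0) \<and> Mcomp x lowest = (\<Sum>g\<in>basis. act (a g) (low g))"
  using Mcomp_in[of x lowest] basis(1) unfolding spanning_def span0_def by auto

definition b0 :: 'm where "b0 = (SOME g. g \<in> basis)"

lemma b0: "b0 \<in> basis"
proof -
  obtain y where "y \<in> Mg lowest" "y \<noteq> 0" using lowest(1) unfolding degrees_def by auto
  then have "basis \<noteq> {}" using basis(1) unfolding spanning_def span0_def by auto
  then show ?thesis unfolding b0_def by (simp add: some_in_eq)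
qed

text \<open>Minimality makes the family independent at b0: a relation with a nonzero coefficient
  at b0 would let us drop b0 from the spanning family.\<close>
lemma basis_independent:
  assumes c: "\<forall>g\<in>basis. c g \<in> Rg 0" and rel: "(\<Sum>g\<in>basis. act (c g) (low g)) = 0"
  shows "c b0 = 0"
proof (rule ccontr)
  assume nz: "c b0 \<noteq> 0"
  let ?J = "basis - {b0}"
  have split: "(\<Sum>g\<in>basis. f g) = f b0 + (\<Sum>g\<in>?J. f g)" for f :: "'m \<Rightarrow> 'm"
    using sum.remove[OF basis_finite b0] by simp
  have rest: "(\<Sum>g\<in>?J. act (c g) (low g)) = - act (c b0) (low b0)"
    using rel split[of "\<lambda>g. act (c g) (low g)"] by (simp add: eq_neg_iff_add_eq_0 add.commute)
  have "Mg lowest \<subseteq> span0 ?J"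
  proof
    fix y assume "y \<in> Mg lowest"
    then obtain a where a: "\<forall>g\<in>basis. a g \<in> Rg 0" "y = (\<Sum>g\<in>basis. act (a g) (low g))"
      using basis(1) unfolding spanning_def span0_def by auto
    define t where "t = a b0 * inverse (c b0)"
    have t: "t \<in> Rg 0" "t * c b0 = a b0"
      unfolding t_def using a(1) c b0 nz Rg0_mult Rg0_inverse by auto
    have tR: "t \<in> R" using t(1) Rg_sub_R by auto
    have "(\<Sum>g\<in>?J. act (a g - t * c g) (low g))
        = (\<Sum>g\<in>?J. act (a g) (low g)) - act t (\<Sum>g\<in>?J. act (c g) (low g))"
      using a(1) c t(1) tR
      by (auto simp: act_diff_left act_mult act_sum_right sum_subtractf[symmetric] Rg0_R Rg0_mult
          intro!: sum.cong)
    also have "\<dots> = (\<Sum>g\<in>?J. act (a g) (low g)) + act (a b0) (low b0)"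
      unfolding rest using tR c b0 t(2) Rg0_R by (auto simp: act_neg_right act_mult[symmetric])
    also have "\<dots> = y" using a(2) split[of "\<lambda>g. act (a g) (low g)"] by (simp add: add.commute)
    finally show "y \<in> span0 ?J"
      unfolding span0_def using a(1) c t(1) Rg0_diff Rg0_mult
      by (intro CollectI exI[of _ "\<lambda>g. a g - t * c g"]) auto
  qed
  then have "spanning ?J" using basis(1) unfolding spanning_def by auto
  then have "card basis \<le> card ?J" by (rule basis(2))
  then show False using card_Diff1_less[OF basis_finite b0] by simp
qed

definition coord :: "'m \<Rightarrow> 'a" where
  "coord y = (SOME c. (\<forall>g\<in>basis. c g \<in> Rg 0) \<and> y = (\<Sum>g\<in>basis. act (c g) (low g))) b0"

lemma coord_eq:
  assumes c: "\<forall>g\<in>basis. c g \<in> Rg 0"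
  shows "coord (\<Sum>g\<in>basis. act (c g) (low g)) = c b0"
proof -
  let ?y = "\<Sum>g\<in>basis. act (c g) (low g)"
  define c' where "c' = (SOME c. (\<forall>g\<in>basis. c g \<in> Rg 0) \<and> ?y = (\<Sum>g\<in>basis. act (c g) (low g)))"
  have c': "\<forall>g\<in>basis. c' g \<in> Rg 0" "?y = (\<Sum>g\<in>basis. act (c' g) (low g))"
    using someI[of "\<lambda>c'. (\<forall>g\<in>basis. c' g \<in> Rg 0) \<and> ?y = (\<Sum>g\<in>basis. act (c' g) (low g))" c] c
    unfolding c'_def by auto
  have "(\<Sum>g\<in>basis. act (c g - c' g) (low g)) = ?y - (\<Sum>g\<in>basis. act (c' g) (low g))"
    using c c'(1) by (auto simp: act_diff_left sum_subtractf[symmetric] Rg0_R intro!: sum.cong)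
  then have "c b0 - c' b0 = 0"
    using basis_independent[of "\<lambda>g. c g - c' g"] c c'(1) c'(2) Rg0_diff by auto
  then show ?thesis unfolding coord_def c'_def[symmetric] by simp
qed

definition psi :: "'m \<Rightarrow> 'a" where "psi x = coord (Mcomp x lowest)"

lemma psi_add: "psi (x + y) = psi x + psi y"
proof -
  obtain a where a: "\<forall>g\<in>basis. a g \<in> Rg 0" "Mcomp x lowest = (\<Sum>g\<in>basis. act (a g) (low g))"
    using basis_span by blast
  obtain b where b: "\<forall>g\<in>basis. b g \<in> Rg 0" "Mcomp y lowest = (\<Sum>g\<in>basis. act (b g) (low g))"
    using basis_span by blast
  have "Mcomp (x + y) lowest = (\<Sum>g\<in>basis. act (a g + b g) (low g))"
    unfolding Mcomp_add a(2) b(2) using a(1) b(1)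
    by (auto simp: act_add_left sum.distrib[symmetric] Rg0_R intro!: sum.cong)
  then show ?thesis unfolding psi_def using a b coord_eq Rg0_add by simp
qed

lemma psi_act: "r \<in> R \<Longrightarrow> psi (act r x) = Rcomp r 0 * psi x"
proof -
  assume r: "r \<in> R"
  obtain a where a: "\<forall>g\<in>basis. a g \<in> Rg 0" "Mcomp x lowest = (\<Sum>g\<in>basis. act (a g) (low g))"
    using basis_span by blast
  have r0: "Rcomp r 0 \<in> Rg 0" using Rcomp_in[OF r] .
  have "Mcomp (act r x) lowest = (\<Sum>g\<in>basis. act (Rcomp r 0 * a g) (low g))"
    unfolding Mcomp_act_lowest[OF r] a(2) using r0 a(1)
    by (auto simp: act_sum_right act_mult Rg0_R intro!: sum.cong)
  then show ?thesis unfolding psi_def using a coord_eq r0 Rg0_mult by simp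
qed

lemma psi_low_b0: "psi (low b0) = 1"
proof -
  have "Mcomp (low b0) lowest = low b0" by (rule Mcomp_homogeneous[OF Mcomp_in])
  also have "\<dots> = (\<Sum>g\<in>basis. act (if g = b0 then 1 else 0) (low g))"
    using b0 basis_finite by (simp add: act_one act_zero_left if_distrib[of "\<lambda>c. act c _"] cong: if_cong)
  finally show ?thesis unfolding psi_def using coord_eq[of "\<lambda>g. if g = b0 then 1 else 0"] Rg0_one Rg0_zero
    by simp
qed

end

section \<open>Truncation of a Q-graded extension below degree 1\<close>

locale graded_extension = graded_ring R Rg
  for R :: "'a::field set" and Rg :: "nat \<Rightarrow> 'a set" +
  fixes S :: "'a set" and Sg :: "rat \<Rightarrow> 'a set"
  assumes graded_S: "graded_subring {q. q \<ge> 0} S Sg"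
    and R_in_S: "\<forall>n. Rg n \<subseteq> Sg (of_nat n)"
begin

lemma S_decomp: "direct_sum_decomp {q. q \<ge> 0} Sg S" using graded_S unfolding graded_subring_def by auto

lemma Sg_mult: "i \<ge> 0 \<Longrightarrow> j \<ge> 0 \<Longrightarrow> x \<in> Sg i \<Longrightarrow> y \<in> Sg j \<Longrightarrow> x * y \<in> Sg (i + j)"
  using graded_S unfolding graded_subring_def by blast

abbreviation Scomp :: "'a \<Rightarrow> rat \<Rightarrow> 'a" where "Scomp s \<equiv> dec {q. q \<ge> 0} Sg s"

lemma Scomp_is: "s \<in> S \<Longrightarrow> is_decomp {q. q \<ge> 0} Sg s (Scomp s)" using dec_is[OF S_decomp] .
lemma Scomp_nonneg: "s \<in> S \<Longrightarrow> Scomp s q \<noteq> 0 \<Longrightarrow> q \<ge> 0" using Scomp_is unfolding is_decomp_def by auto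
lemma Scomp_finite: "s \<in> S \<Longrightarrow> finite {q. Scomp s q \<noteq> 0}" using Scomp_is unfolding is_decomp_def by auto

definition trunc :: "(rat \<Rightarrow> 'a) \<Rightarrow> 'a" where
  "trunc f = (\<Sum>q\<in>{q. f q \<noteq> 0 \<and> q < 1}. f q)"

definition T :: "'a \<Rightarrow> 'a" where "T s = trunc (Scomp s)"

lemma trunc_superset:
  assumes "finite U" "{q. f q \<noteq> 0} \<subseteq> U"
  shows "trunc f = (\<Sum>q\<in>U \<inter> {q. q < 1}. f q)"
  unfolding trunc_def using assms by (intro sum.mono_neutral_left) auto

lemma T_add:
  assumes s: "s \<in> S" and t: "t \<in> S"
  shows "T (s + t) = T s + T t"
proof -
  have comp: "Scomp (s + t) = (\<lambda>q. Scomp s q + Scomp t q)"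
    by (rule dec_eq[OF S_decomp decomp_add[OF S_decomp Scomp_is[OF s] Scomp_is[OF t]]])
  let ?U = "{q. Scomp s q \<noteq> 0} \<union> {q. Scomp t q \<noteq> 0}"
  have "finite ?U" using Scomp_finite s t by auto
  then show ?thesis
    unfolding T_def comp by (subst (1 2 3) trunc_superset[of ?U]) (auto simp: sum.distrib)
qed

text \<open>Multiplying by r_i with i \<ge> 1 moves every component of s into degree \<ge> 1, so only r_0
  survives the truncation.\<close>
lemma T_mult:
  assumes r: "r \<in> R" and s: "s \<in> S"
  shows "T (r * s) = Rcomp r 0 * T s"
proof -
  let ?F = "{i. Rcomp r i \<noteq> 0}" and ?f = "Scomp s"
  have fF: "finite ?F" using Rcomp_finite[OF r] .
  have rs: "r * s = (\<Sum>i\<in>?F. Rcomp r i * s)" using Rcomp_sum[OF r] by (metis sum_distrib_right)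
  have "is_decomp {q. q \<ge> 0} Sg (Rcomp r i * s) (\<lambda>p. Rcomp r i * ?f (p - of_nat i))" for i
  proof (rule decomp_shift[OF S_decomp Scomp_is[OF s]])
    show "Rcomp r i * y \<in> Sg (j + of_nat i)" if "j \<in> {q. q \<ge> 0}" "y \<in> Sg j" for j :: rat and y
      using Sg_mult[of "of_nat i" j, OF _ _ _ that(2)] that(1) Rcomp_in[OF r, of i] R_in_S
      by (auto simp: add.commute)
  qed (auto simp: distrib_left)
  then have comp: "Scomp (r * s) = (\<lambda>p. \<Sum>i\<in>?F. Rcomp r i * ?f (p - of_nat i))"
    unfolding rs by (intro dec_eq[OF S_decomp decomp_sum[OF S_decomp fF]])
  let ?U = "{q. ?f q \<noteq> 0} \<union> (\<Union>i\<in>?F. (\<lambda>q. q + of_nat i) ` {q. ?f q \<noteq> 0})"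
  have fU: "finite ?U" using fF Scomp_finite[OF s] by auto
  have supp: "{p. (\<Sum>i\<in>?F. Rcomp r i * ?f (p - of_nat i)) \<noteq> 0} \<subseteq> ?U"
  proof
    fix p assume "p \<in> {p. (\<Sum>i\<in>?F. Rcomp r i * ?f (p - of_nat i)) \<noteq> 0}"
    then obtain i where i: "i \<in> ?F" "?f (p - of_nat i) \<noteq> 0"
      by (metis (mono_tags, lifting) mem_Collect_eq mult_zero_right sum.neutral)
    then have "p \<in> (\<lambda>q. q + of_nat i) ` {q. ?f q \<noteq> 0}" by (intro image_eqI[of _ _ "p - of_nat i"]) auto
    then show "p \<in> ?U" using i(1) by blast
  qed
  have shifted_out: "Rcomp r i * ?f (p - of_nat i) = 0" if "i \<noteq> 0" "p < 1" for i p
    using that Scomp_nonneg[OF s, of "p - of_nat i"] by (cases "?f (p - of_nat i) = 0") auto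
  have "T (r * s) = (\<Sum>p\<in>?U \<inter> {q. q < 1}. \<Sum>i\<in>?F. Rcomp r i * ?f (p - of_nat i))"
    unfolding T_def comp using fU supp by (intro trunc_superset)
  also have "\<dots> = (\<Sum>i\<in>?F. \<Sum>p\<in>?U \<inter> {q. q < 1}. Rcomp r i * ?f (p - of_nat i))"
    by (rule sum.swap)
  also have "\<dots> = (\<Sum>i\<in>?F. if i = 0 then Rcomp r 0 * T s else 0)"
  proof (rule sum.cong[OF refl])
    fix i
    show "(\<Sum>p\<in>?U \<inter> {q. q < 1}. Rcomp r i * ?f (p - of_nat i))
        = (if i = 0 then Rcomp r 0 * T s else 0)"
    proof (cases "i = 0")
      case True
      have "T s = (\<Sum>p\<in>?U \<inter> {q. q < 1}. ?f p)" unfolding T_def using fU by (intro trunc_superset) auto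
      then show ?thesis using True by (simp add: sum_distrib_left)
    next
      case False
      then show ?thesis using shifted_out[OF False] by (auto intro!: sum.neutral)
    qed
  qed
  also have "\<dots> = Rcomp r 0 * T s" by (simp add: sum.delta[OF fF])
  finally show ?thesis .
qed

lemma T_nonzero:
  assumes a: "a \<in> S" "a \<noteq> 0" and nu: "nu Sg a < 1"
  shows "T a \<noteq> 0"
proof
  assume T0: "T a = 0"
  let ?f = "Scomp a"
  let ?Q = "{q. q \<ge> 0 \<and> ?f q \<noteq> 0}"
  have fQ: "finite ?Q" using Scomp_finite[OF a(1)] by (auto intro: finite_subset)
  have "?Q \<noteq> {}"
  proof
    assume "?Q = {}"
    then have "{q. ?f q \<noteq> 0} = {}" using Scomp_nonneg[OF a(1)] by blast
    then show False using Scomp_is[OF a(1)] a(2) unfolding is_decomp_def by simp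
  qed
  then have "Min ?Q \<in> ?Q" by (rule Min_in[OF fQ])
  moreover have "nu Sg a = Min ?Q" unfolding nu_def dec_def by simp
  ultimately obtain q0 where q0: "?f q0 \<noteq> 0" "q0 < 1" using nu by auto
  define g where "g q = (if q < 1 then ?f q else 0)" for q
  have supp_g: "{q. g q \<noteq> 0} = {q. ?f q \<noteq> 0 \<and> q < 1}" unfolding g_def by auto
  have "is_decomp {q. q \<ge> 0} Sg (T a) g"
    unfolding is_decomp_def
  proof (intro conjI allI impI ballI)
    show "finite {q. g q \<noteq> 0}" unfolding supp_g using Scomp_finite[OF a(1)] by (auto intro: finite_subset)
    show "q \<in> {q. q \<ge> 0}" if "g q \<noteq> 0" for q
      using that Scomp_nonneg[OF a(1)] unfolding g_def by (auto split: if_splits)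
    show "g q \<in> Sg q" if "q \<in> {q. q \<ge> 0}" for q
      using Scomp_is[OF a(1)] that S_decomp unfolding g_def is_decomp_def direct_sum_decomp_def by auto
    show "T a = (\<Sum>q\<in>{q. g q \<noteq> 0}. g q)" unfolding supp_g T_def trunc_def
      by (intro sum.cong) (auto simp: g_def)
  qed
  then have "g = (\<lambda>_. 0)"
    using T0 dec_eq[OF S_decomp] decomp_zero[OF S_decomp] by metis
  then show False using q0 fun_cong[of g _ q0] unfolding g_def by simp
qed

end

theorem proposition2p11:
  fixes R :: "'a::field set" and Rg :: "nat \<Rightarrow> 'a set"
    and S :: "'a set" and Sg :: "rat \<Rightarrow> 'a set"
    and act :: "'a \<Rightarrow> 'm::ab_group_add \<Rightarrow> 'm" and Mg :: "int \<Rightarrow> 'm set"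
  assumes "fg_graded_domain R Rg"
    and "is_alg_closure_of_frac R"
    and "is_RplusGR R Rg S Sg"
    and "fg_module R act"
    and "Zgraded_module Rg act Mg"
    and "\<exists>m::'m. m \<noteq> 0"
  shows "\<exists>m::'m. \<not> almost_zero R S Sg act m"
proof -
  interpret M: fg_graded_module R Rg act Mg
    using assms(1,4-6) unfolding fg_graded_domain_def fg_module_def
    by unfold_locales auto
  interpret S: graded_extension R Rg S Sg
    using assms(1,3) unfolding fg_graded_domain_def is_RplusGR_def qgraded_ext_def
    by unfold_locales auto
  let ?m0 = "M.low M.b0"
  have "\<not> almost_zero R S Sg act ?m0"
  proof
    assume "almost_zero R S Sg act ?m0"
    then obtain a where a: "a \<in> S" "a \<noteq> 0" "nu Sg a < 1"
      and rel: "Poly_Mapping.single (?m0, a) 1 \<in> tensor_rel R S act"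
      unfolding almost_zero_def by (meson zero_less_one)
    have "M.psi ?m0 * S.T a = 0"
      by (rule balanced_map_vanishes[where B = "\<lambda>x s. M.psi x * S.T s", OF _ _ _ rel])
        (simp_all add: M.psi_add M.psi_act S.T_add S.T_mult algebra_simps)
    then show False using M.psi_low_b0 S.T_nonzero[OF a] by simp
  qed
  then show ?thesis by blast
qed

end
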